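(* For a multiplicative Lie algebra $G$: (1) $(Z(G)\otimes G)(G\otimes Z(G))\subseteq Z(G\otimes G)$; (2) $(LZ(G)\otimes G)(G\otimes LZ(G))\subseteq LZ(G\otimes G)$; (3) $(\mathcal Z(G)\otimes G)(G\otimes\mathcal Z(G))\subseteq\mathcal Z(G\otimes G)$.
   Context: A multiplicative Lie algebra is a group $(G,\cdot)$ with a binary operation $\star$ such that for all $x,y,z\in G$: $x\star x=1$; $x\star(yz)=(x\star y)\,{}^y(x\star z)$; $(xy)\star z={}^x(y\star z)(x\star z)$; $((x\star y)\star{}^yz)((y\star z)\star{}^zx)((z\star x)\star{}^xy)=1$; ${}^z(x\star y)={}^zx\star{}^zy$, where ${}^xy=xyx^{-1}$. $Z(G)$ is the group center, $LZ(G)=\{x: x\star y=1\ \forall y\}$, $\mathcal Z(G)=LZ(G)\cap Z(G)$. The tensor square $G\otimes G$ is the multiplicative Lie algebra generated by symbols $x\otimes y$ ($x,y\in G$) subject to, for all $x,x',y,y'\in G$: $x\otimes(yy')=(x\otimes y)({}^yx\otimes{}^yy')$; $(xx')\otimes y=({}^xx'\otimes{}^xy)(x\otimes y)$; $((x\star x')\otimes{}^{x'}y)({}^yx\otimes(x'\star y))^{-1}({}^xx'\otimes(x\star y)^{-1})^{-1}=1$; $({}^{y'}x\otimes(y\star y'))((y\star x)^{-1}\otimes{}^yy')^{-1}((y'\star x)\otimes{}^xy)^{-1}=1$; and $(x\otimes y)\star(x'\otimes y')=(y\star x)^{-1}\otimes(x'\star y')$. For an ideal $A$ of $G$, $A\otimes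 G$ (resp. $G\otimes A$) is the subgroup of $G\otimes G$ generated by all $a\otimes b$ with $a\in A,b\in G$ (resp. $a\in G,b\in A$). *)

theory Defs
  imports "HOL-Algebra.Coset" "HOL-Algebra.Generated_Groups"
begin

definition conj :: "('a, 'b) monoid_scheme \<Rightarrow> 'a \<Rightarrow> 'a \<Rightarrow> 'a" where
  "conj G x y = x \<otimes>\<^bsub>G\<^esub> y \<otimes>\<^bsub>G\<^esub> inv\<^bsub>G\<^esub> x"

definition mult_lie_alg :: "('a, 'b) monoid_scheme \<Rightarrow> ('a \<Rightarrow> 'a \<Rightarrow> 'a) \<Rightarrow> bool" where
  "mult_lie_alg G st \<longleftrightarrow> group G \<and>
    (\<forall>x\<in>carrier G. \<forall>y\<in>carrier G. st x y \<in> carrier G) \<and>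
    (\<forall>x\<in>carrier G. st x x = \<one>\<^bsub>G\<^esub>) \<and>
    (\<forall>x\<in>carrier G. \<forall>y\<in>carrier G. \<forall>z\<in>carrier G.
        st x (y \<otimes>\<^bsub>G\<^esub> z) = st x y \<otimes>\<^bsub>G\<^esub> conj G y (st x z)) \<and>
    (\<forall>x\<in>carrier G. \<forall>y\<in>carrier G. \<forall>z\<in>carrier G.
        st (x \<otimes>\<^bsub>G\<^esub> y) z = conj G x (st y z) \<otimes>\<^bsub>G\<^esub> st x z) \<and>
    (\<forall>x\<in>carrier G. \<forall>y\<in>carrier G. \<forall>z\<in>carrier G.
        st (st x y) (conj G y z) \<otimes>\<^bsub>G\<^esub> st (st y z) (conj G z x) \<otimes>\<^bsub>G\<^esub>
        st (st z x) (conj G x y) = \<one>\<^bsub>G\<^esub>) \<and>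
    (\<forall>x\<in>carrier G. \<forall>y\<in>carrier G. \<forall>z\<in>carrier G.
        conj G z (st x y) = st (conj G z x) (conj G z y))"

definition grp_center :: "('a, 'b) monoid_scheme \<Rightarrow> 'a set" where
  "grp_center G = {x \<in> carrier G. \<forall>y\<in>carrier G. x \<otimes>\<^bsub>G\<^esub> y = y \<otimes>\<^bsub>G\<^esub> x}"

definition lie_center :: "('a, 'b) monoid_scheme \<Rightarrow> ('a \<Rightarrow> 'a \<Rightarrow> 'a) \<Rightarrow> 'a set" where
  "lie_center G st = {x \<in> carrier G. \<forall>y\<in>carrier G. st x y = \<one>\<^bsub>G\<^esub>}"

definition mla_center :: "('a, 'b) monoid_scheme \<Rightarrow> ('a \<Rightarrow> 'a \<Rightarrow> 'a) \<Rightarrow> 'a set" where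
  "mla_center G st = lie_center G st \<inter> grp_center G"

text \<open>Terms of the free multiplicative Lie algebra on symbols x \<otimes> y.\<close>
datatype 'a tm = Gen 'a 'a | Unit | Mul "'a tm" "'a tm" | Inv "'a tm" | Star "'a tm" "'a tm"

fun tgens :: "'a tm \<Rightarrow> ('a \<times> 'a) set" where
  "tgens (Gen x y) = {(x, y)}"
| "tgens Unit = {}"
| "tgens (Mul s t) = tgens s \<union> tgens t"
| "tgens (Inv t) = tgens t"
| "tgens (Star s t) = tgens s \<union> tgens t"

definition valid_tm :: "('a, 'b) monoid_scheme \<Rightarrow> 'a tm \<Rightarrow> bool" where
  "valid_tm G t \<longleftrightarrow> tgens t \<subseteq> carrier G \<times> carrier G"

definition tcj :: "'a tm \<Rightarrow> 'a tm \<Rightarrow> 'a tm" where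
  "tcj s t = Mul (Mul s t) (Inv s)"

inductive teq :: "('a, 'b) monoid_scheme \<Rightarrow> ('a \<Rightarrow> 'a \<Rightarrow> 'a) \<Rightarrow> 'a tm \<Rightarrow> 'a tm \<Rightarrow> bool"
  for G st where
  refl: "valid_tm G t \<Longrightarrow> teq G st t t"
| sym: "teq G st t u \<Longrightarrow> teq G st u t"
| trans: "teq G st t u \<Longrightarrow> teq G st u v \<Longrightarrow> teq G st t v"
| cong_mul: "teq G st t t' \<Longrightarrow> teq G st u u' \<Longrightarrow> teq G st (Mul t u) (Mul t' u')"
| cong_inv: "teq G st t t' \<Longrightarrow> teq G st (Inv t) (Inv t')"
| cong_star: "teq G st t t' \<Longrightarrow> teq G st u u' \<Longrightarrow> teq G st (Star t u) (Star t' u')"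
| assoc: "valid_tm G t \<Longrightarrow> valid_tm G u \<Longrightarrow> valid_tm G v \<Longrightarrow>
    teq G st (Mul (Mul t u) v) (Mul t (Mul u v))"
| lunit: "valid_tm G t \<Longrightarrow> teq G st (Mul Unit t) t"
| runit: "valid_tm G t \<Longrightarrow> teq G st (Mul t Unit) t"
| linv: "valid_tm G t \<Longrightarrow> teq G st (Mul (Inv t) t) Unit"
| rinv: "valid_tm G t \<Longrightarrow> teq G st (Mul t (Inv t)) Unit"
| star_self: "valid_tm G t \<Longrightarrow> teq G st (Star t t) Unit"
| star_mul_r: "valid_tm G t \<Longrightarrow> valid_tm G u \<Longrightarrow> valid_tm G v \<Longrightarrow>
    teq G st (Star t (Mul u v)) (Mul (Star t u) (tcj u (Star t v)))"
| star_mul_l: "valid_tm G t \<Longrightarrow> valid_tm G u \<Longrightarrow> valid_tm G v \<Longrightarrow>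
    teq G st (Star (Mul t u) v) (Mul (tcj t (Star u v)) (Star t v))"
| jacobi: "valid_tm G t \<Longrightarrow> valid_tm G u \<Longrightarrow> valid_tm G v \<Longrightarrow>
    teq G st (Mul (Mul (Star (Star t u) (tcj u v)) (Star (Star u v) (tcj v t)))
                  (Star (Star v t) (tcj t u))) Unit"
| star_conj: "valid_tm G t \<Longrightarrow> valid_tm G u \<Longrightarrow> valid_tm G v \<Longrightarrow>
    teq G st (tcj v (Star t u)) (Star (tcj v t) (tcj v u))"
| rel1: "x \<in> carrier G \<Longrightarrow> y \<in> carrier G \<Longrightarrow> y' \<in> carrier G \<Longrightarrow>
    teq G st (Gen x (y \<otimes>\<^bsub>G\<^esub> y')) (Mul (Gen x y) (Gen (conj G y x) (conj G y y')))"
| rel2: "x \<in> carrier G \<Longrightarrow> x' \<in> carrier G \<Longrightarrow> y \<in> carrier G \<Longrightarrow>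
    teq G st (Gen (x \<otimes>\<^bsub>G\<^esub> x') y) (Mul (Gen (conj G x x') (conj G x y)) (Gen x y))"
| rel3: "x \<in> carrier G \<Longrightarrow> x' \<in> carrier G \<Longrightarrow> y \<in> carrier G \<Longrightarrow>
    teq G st (Mul (Mul (Gen (st x x') (conj G x' y)) (Inv (Gen (conj G y x) (st x' y))))
                  (Inv (Gen (conj G x x') (inv\<^bsub>G\<^esub> (st x y))))) Unit"
| rel4: "x \<in> carrier G \<Longrightarrow> y \<in> carrier G \<Longrightarrow> y' \<in> carrier G \<Longrightarrow>
    teq G st (Mul (Mul (Gen (conj G y' x) (st y y')) (Inv (Gen (inv\<^bsub>G\<^esub> (st y x)) (conj G y y'))))
                  (Inv (Gen (st y' x) (conj G x y)))) Unit"
| rel5: "x \<in> carrier G \<Longrightarrow> y \<in> carrier G \<Longrightarrow> x' \<in> carrier G \<Longrightarrow> y' \<in> carrier G \<Longrightarrow>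
    teq G st (Star (Gen x y) (Gen x' y')) (Gen (inv\<^bsub>G\<^esub> (st y x)) (st x' y'))"

definition teq_rel :: "('a, 'b) monoid_scheme \<Rightarrow> ('a \<Rightarrow> 'a \<Rightarrow> 'a) \<Rightarrow> ('a tm \<times> 'a tm) set" where
  "teq_rel G st = {(t, u). teq G st t u}"

definition tensor_mult :: "('a, 'b) monoid_scheme \<Rightarrow> ('a \<Rightarrow> 'a \<Rightarrow> 'a) \<Rightarrow> 'a tm set \<Rightarrow> 'a tm set \<Rightarrow> 'a tm set" where
  "tensor_mult G st A B = (\<Union>a\<in>A. \<Union>b\<in>B. teq_rel G st `` {Mul a b})"

definition tensor_sq :: "('a, 'b) monoid_scheme \<Rightarrow> ('a \<Rightarrow> 'a \<Rightarrow> 'a) \<Rightarrow> 'a tm set monoid" where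
  "tensor_sq G st =
     \<lparr> carrier = {t. valid_tm G t} // teq_rel G st,
       mult = tensor_mult G st,
       one = teq_rel G st `` {Unit} \<rparr>"

definition tensor_star :: "('a, 'b) monoid_scheme \<Rightarrow> ('a \<Rightarrow> 'a \<Rightarrow> 'a) \<Rightarrow> 'a tm set \<Rightarrow> 'a tm set \<Rightarrow> 'a tm set" where
  "tensor_star G st A B = (\<Union>a\<in>A. \<Union>b\<in>B. teq_rel G st `` {Star a b})"

definition tens :: "('a, 'b) monoid_scheme \<Rightarrow> ('a \<Rightarrow> 'a \<Rightarrow> 'a) \<Rightarrow> 'a \<Rightarrow> 'a \<Rightarrow> 'a tm set" where
  "tens G st x y = teq_rel G st `` {Gen x y}"

definition tens_left :: "('a, 'b) monoid_scheme \<Rightarrow> ('a \<Rightarrow> 'a \<Rightarrow> 'a) \<Rightarrow> 'a set \<Rightarrow> 'a tm set set" where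
  "tens_left G st A = generate (tensor_sq G st) {tens G st a b | a b. a \<in> A \<and> b \<in> carrier G}"

definition tens_right :: "('a, 'b) monoid_scheme \<Rightarrow> ('a \<Rightarrow> 'a \<Rightarrow> 'a) \<Rightarrow> 'a set \<Rightarrow> 'a tm set set" where
  "tens_right G st A = generate (tensor_sq G st) {tens G st a b | a b. a \<in> carrier G \<and> b \<in> A}"

end

theory Submission
  imports Defs
begin

text \<open>
  The centre, the Lie centre and their intersection are subgroups of every multiplicative
  Lie algebra, and G \<otimes> G is itself a multiplicative Lie algebra which, as a group, is
  generated by the symbols x \<otimes> y (the subgroup they generate is closed under the star,
  by the identities for the star of products and inverses). It therefore suffices to check
  the symbols a \<otimes> b and b \<otimes> a with a in the respective centre against the symbols.

  For the Lie centre this is the relation (x \<otimes> y) \<star> (x' \<otimes> y') = (x \<star> y) \<otimes> (x' \<star> y')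
  together with 1 \<otimes> y = 1 and the antisymmetry x \<star> y = (y \<star> x)\<inverse>. For the centre,
  expanding (x a) \<otimes> (y b) with the two product relations in either order and cancelling
  gives (x \<otimes> y) (u a u\<inverse> \<otimes> u b u\<inverse>) = (v a v\<inverse> \<otimes> v b v\<inverse>) (x \<otimes> y) with u = y x and
  v = x y; when x and y commute, this says that x \<otimes> y commutes with every symbol.
\<close>

section \<open>Conjugation and centres in groups\<close>

lemma (in group) inv_mult_cancel_left [simp]:
  "x \<in> carrier G \<Longrightarrow> y \<in> carrier G \<Longrightarrow> inv x \<otimes> (x \<otimes> y) = y"
  by (simp add: m_assoc[symmetric])

lemma (in group) mult_inv_cancel_left [simp]:
  "x \<in> carrier G \<Longrightarrow> y \<in> carrier G \<Longrightarrow> x \<otimes> (inv x \<otimes> y) = y"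
  by (simp add: m_assoc[symmetric])

lemma (in group) conj_closed [simp]: "x \<in> carrier G \<Longrightarrow> y \<in> carrier G \<Longrightarrow> conj G x y \<in> carrier G"
  by (simp add: conj_def)

lemma (in group) conj_one [simp]: "x \<in> carrier G \<Longrightarrow> conj G x \<one> = \<one>"
  by (simp add: conj_def)

lemma (in group) conj_mult: "x \<in> carrier G \<Longrightarrow> a \<in> carrier G \<Longrightarrow> b \<in> carrier G \<Longrightarrow>
    conj G x (a \<otimes> b) = conj G x a \<otimes> conj G x b"
  by (simp add: conj_def m_assoc)

lemma (in group) conj_conj: "x \<in> carrier G \<Longrightarrow> y \<in> carrier G \<Longrightarrow> a \<in> carrier G \<Longrightarrow>
    conj G (conj G y x) (conj G y a) = conj G (y \<otimes> x) a"
  by (simp add: conj_def m_assoc inv_mult_group)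

lemma (in group) conj_inv_conj: "x \<in> carrier G \<Longrightarrow> a \<in> carrier G \<Longrightarrow> conj G x (conj G (inv x) a) = a"
  by (simp add: conj_def m_assoc)

lemma (in group) conj_eq_one_iff: "x \<in> carrier G \<Longrightarrow> a \<in> carrier G \<Longrightarrow> conj G x a = \<one> \<longleftrightarrow> a = \<one>"
  by (simp add: conj_def inv_solve_right')

lemma (in group) conj_mem_subgroup:
  "subgroup K G \<Longrightarrow> x \<in> K \<Longrightarrow> y \<in> K \<Longrightarrow> conj G x y \<in> K"
  unfolding conj_def by (intro subgroup.m_closed subgroup.m_inv_closed)

lemma (in group) subgroup_commuting_with:
  assumes a: "a \<in> carrier G"
  shows "subgroup {x \<in> carrier G. a \<otimes> x = x \<otimes> a} G"
proof (rule subgroupI)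
  fix x assume "x \<in> {x \<in> carrier G. a \<otimes> x = x \<otimes> a}"
  then have x: "x \<in> carrier G" and ax: "a \<otimes> x = x \<otimes> a" by auto
  have "a \<otimes> inv x = inv x \<otimes> (x \<otimes> a) \<otimes> inv x"
    using a x by (simp add: m_assoc)
  also have "\<dots> = inv x \<otimes> a"
    using a x by (simp add: ax[symmetric] m_assoc)
  finally show "inv x \<in> {x \<in> carrier G. a \<otimes> x = x \<otimes> a}"
    using x by simp
next
  fix x y assume "x \<in> {x \<in> carrier G. a \<otimes> x = x \<otimes> a}" "y \<in> {x \<in> carrier G. a \<otimes> x = x \<otimes> a}"
  then have x: "x \<in> carrier G" and ax: "a \<otimes> x = x \<otimes> a"
    and y: "y \<in> carrier G" and ay: "a \<otimes> y = y \<otimes> a" by auto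
  have "a \<otimes> (x \<otimes> y) = x \<otimes> (a \<otimes> y)"
    using a x y by (simp add: m_assoc[symmetric] ax)
  also have "\<dots> = x \<otimes> y \<otimes> a"
    using a x y by (simp add: m_assoc ay)
  finally show "x \<otimes> y \<in> {x \<in> carrier G. a \<otimes> x = x \<otimes> a}"
    using x y by simp
next
  show "{x \<in> carrier G. a \<otimes> x = x \<otimes> a} \<subseteq> carrier G" by blast
next
  have "\<one> \<in> {x \<in> carrier G. a \<otimes> x = x \<otimes> a}" using a by simp
  then show "{x \<in> carrier G. a \<otimes> x = x \<otimes> a} \<noteq> {}" by auto
qed

lemma (in group) grp_center_eq_Inter:
  "grp_center G = (\<Inter>a\<in>carrier G. {x \<in> carrier G. a \<otimes> x = x \<otimes> a})"
  unfolding grp_center_def by (auto simp: eq_commute)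

lemma (in group) subgroup_grp_center: "subgroup (grp_center G) G"
  unfolding grp_center_eq_Inter
  by (rule subgroups_Inter) (auto intro: subgroup_commuting_with)

lemma (in group) grp_centerI_generate:
  assumes gen: "generate G X = carrier G" and a: "a \<in> carrier G"
    and comm: "\<And>x. x \<in> X \<Longrightarrow> a \<otimes> x = x \<otimes> a"
  shows "a \<in> grp_center G"
proof -
  have "X \<subseteq> carrier G"
    using generate.incl[of _ X G] unfolding gen by blast
  then have "generate G X \<subseteq> {x \<in> carrier G. a \<otimes> x = x \<otimes> a}"
    using comm by (intro generate_subgroup_incl subgroup_commuting_with a) auto
  then show ?thesis
    using a unfolding gen grp_center_def by blast
qed

section \<open>Centres of multiplicative Lie algebras\<close>

locale mla =
  fixes G :: "('a, 'b) monoid_scheme" (structure) and st :: "'a \<Rightarrow> 'a \<Rightarrow> 'a"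
  assumes mult_lie_alg: "mult_lie_alg G st"

sublocale mla \<subseteq> group G
  using mult_lie_alg unfolding mult_lie_alg_def by blast

context mla
begin

lemma star_closed [simp]: "x \<in> carrier G \<Longrightarrow> y \<in> carrier G \<Longrightarrow> st x y \<in> carrier G"
  and star_self [simp]: "x \<in> carrier G \<Longrightarrow> st x x = \<one>"
  and star_mult_right: "x \<in> carrier G \<Longrightarrow> y \<in> carrier G \<Longrightarrow> z \<in> carrier G \<Longrightarrow>
    st x (y \<otimes> z) = st x y \<otimes> conj G y (st x z)"
  and star_mult_left: "x \<in> carrier G \<Longrightarrow> y \<in> carrier G \<Longrightarrow> z \<in> carrier G \<Longrightarrow>
    st (x \<otimes> y) z = conj G x (st y z) \<otimes> st x z"
  using mult_lie_alg unfolding mult_lie_alg_def by blast+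

lemma star_one_right [simp]: "x \<in> carrier G \<Longrightarrow> st x \<one> = \<one>"
  using star_mult_right[of x \<one> \<one>] by (simp add: conj_def)

lemma star_inv_right:
  assumes x: "x \<in> carrier G" and y: "y \<in> carrier G"
  shows "st x (inv y) = conj G (inv y) (inv (st x y))"
proof -
  have "st x y \<otimes> conj G y (st x (inv y)) = st x (y \<otimes> inv y)"
    using x y by (intro star_mult_right[symmetric]) simp_all
  also have "\<dots> = \<one>"
    using x y by simp
  finally have "st x y \<otimes> conj G y (st x (inv y)) = \<one>" .
  then have "conj G y (st x (inv y)) \<otimes> st x y = \<one>"
    by (rule inv_comm) (use x y in simp_all)
  then have inv_eq: "inv (st x y) = conj G y (st x (inv y))"
    using x y by (intro inv_equality) simp_all
  have "st x (inv y) = conj G (inv y) (conj G y (st x (inv y)))"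
    using x y conj_inv_conj[of "inv y" "st x (inv y)"] by simp
  also have "\<dots> = conj G (inv y) (inv (st x y))"
    by (simp only: inv_eq)
  finally show ?thesis .
qed

lemma inv_star:
  assumes x: "x \<in> carrier G" and y: "y \<in> carrier G"
  shows "inv (st x y) = st y x"
proof -
  have "\<one> = st (x \<otimes> y) (x \<otimes> y)" using x y by simp
  also have "\<dots> = conj G x (st y (x \<otimes> y)) \<otimes> st x (x \<otimes> y)"
    using x y by (intro star_mult_left) simp_all
  also have "st y (x \<otimes> y) = st y x"
    using x y star_mult_right[of y x y] by simp
  also have "st x (x \<otimes> y) = conj G x (st x y)"
    using x y star_mult_right[of x x y] by simp
  finally have one_eq: "\<one> = conj G x (st y x) \<otimes> conj G x (st x y)" .
  have "conj G x (st y x \<otimes> st x y) = \<one>"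
    using x y by (simp add: conj_mult one_eq[symmetric])
  then have "st y x \<otimes> st x y = \<one>"
    using x y by (simp add: conj_eq_one_iff)
  then show ?thesis
    using x y by (intro inv_equality) simp_all
qed

lemma star_eq_one_swap: "x \<in> carrier G \<Longrightarrow> y \<in> carrier G \<Longrightarrow> st x y = \<one> \<longleftrightarrow> st y x = \<one>"
  by (metis inv_star inv_eq_1_iff star_closed)

lemma subgroup_star_annihilator:
  assumes a: "a \<in> carrier G"
  shows "subgroup {y \<in> carrier G. st a y = \<one>} G"
proof (rule subgroupI)
  fix y assume "y \<in> {y \<in> carrier G. st a y = \<one>}"
  then show "inv y \<in> {y \<in> carrier G. st a y = \<one>}"
    using a by (simp add: star_inv_right)
next
  fix y z assume "y \<in> {y \<in> carrier G. st a y = \<one>}" "z \<in> {y \<in> carrier G. st a y = \<one>}"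
  then show "y \<otimes> z \<in> {y \<in> carrier G. st a y = \<one>}"
    using a by (simp add: star_mult_right)
next
  show "{y \<in> carrier G. st a y = \<one>} \<subseteq> carrier G" by blast
next
  have "\<one> \<in> {y \<in> carrier G. st a y = \<one>}" using a by simp
  then show "{y \<in> carrier G. st a y = \<one>} \<noteq> {}" by auto
qed

lemma lie_center_eq_Inter:
  "lie_center G st = \<Inter> ((\<lambda>a. {y \<in> carrier G. st a y = \<one>}) ` carrier G)"
  unfolding lie_center_def using star_eq_one_swap by blast

lemma subgroup_lie_center: "subgroup (lie_center G st) G"
  unfolding lie_center_eq_Inter
  by (rule subgroups_Inter) (auto intro: subgroup_star_annihilator)

lemma subgroup_mla_center: "subgroup (mla_center G st) G"
  unfolding mla_center_def by (intro subgroups_Inter_pair subgroup_lie_center subgroup_grp_center)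

lemma lie_centerI_generate:
  assumes gen: "generate G X = carrier G" and a: "a \<in> carrier G"
    and ann: "\<And>x. x \<in> X \<Longrightarrow> st a x = \<one>"
  shows "a \<in> lie_center G st"
proof -
  have "X \<subseteq> carrier G"
    using generate.incl[of _ X G] unfolding gen by blast
  then have "generate G X \<subseteq> {y \<in> carrier G. st a y = \<one>}"
    using ann by (intro generate_subgroup_incl subgroup_star_annihilator a) auto
  then show ?thesis
    using a unfolding gen lie_center_def by blast
qed

lemma subgroup_star_closed_right:
  assumes K: "subgroup K G" and a: "a \<in> carrier G"
  shows "subgroup {y \<in> K. st a y \<in> K} G"
proof (rule subgroupI)
  fix y assume "y \<in> {y \<in> K. st a y \<in> K}"
  then have y: "y \<in> K" "st a y \<in> K" by auto
  then have "st a (inv y) = conj G (inv y) (inv (st a y))"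
    using a subgroup.subset[OF K] by (intro star_inv_right) auto
  then show "inv y \<in> {y \<in> K. st a y \<in> K}"
    using K y by (auto intro: conj_mem_subgroup subgroup.m_inv_closed)
next
  fix y z assume "y \<in> {y \<in> K. st a y \<in> K}" "z \<in> {y \<in> K. st a y \<in> K}"
  then have yz: "y \<in> K" "st a y \<in> K" "z \<in> K" "st a z \<in> K" by auto
  then have "st a (y \<otimes> z) = st a y \<otimes> conj G y (st a z)"
    using a subgroup.subset[OF K] by (intro star_mult_right) auto
  then show "y \<otimes> z \<in> {y \<in> K. st a y \<in> K}"
    using K yz by (auto intro: conj_mem_subgroup subgroup.m_closed)
next
  show "{y \<in> K. st a y \<in> K} \<subseteq> carrier G" using subgroup.subset[OF K] by auto
next
  have "\<one> \<in> {y \<in> K. st a y \<in> K}" using a subgroup.one_closed[OF K] by simp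
  then show "{y \<in> K. st a y \<in> K} \<noteq> {}" by auto
qed

lemma generate_star_closed:
  assumes X: "X \<subseteq> carrier G"
    and star_X: "\<And>x y. x \<in> X \<Longrightarrow> y \<in> X \<Longrightarrow> st x y \<in> generate G X"
    and a: "a \<in> generate G X" and b: "b \<in> generate G X"
  shows "st a b \<in> generate G X"
proof -
  have H: "subgroup (generate G X) G"
    by (rule generate_is_subgroup[OF X])
  have H_carrier: "generate G X \<subseteq> carrier G"
    by (rule subgroup.subset[OF H])
  have X_H: "X \<subseteq> generate G X"
    using generate.incl[of _ X G] by blast
  have star_X_H: "st x y \<in> generate G X" if x: "x \<in> X" and y: "y \<in> generate G X" for x y
  proof -
    have "generate G X \<subseteq> {y \<in> generate G X. st x y \<in> generate G X}"
      using x X X_H star_X by (intro generate_subgroup_incl subgroup_star_closed_right H) auto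
    then show ?thesis using y by blast
  qed
  have "st a x \<in> generate G X" if x: "x \<in> X" for x
  proof -
    have "st a x = inv (st x a)"
      using x a X H_carrier by (simp add: inv_star subset_iff)
    then show ?thesis
      using star_X_H[OF x a] H by (simp add: subgroup.m_inv_closed)
  qed
  then have "generate G X \<subseteq> {y \<in> generate G X. st a y \<in> generate G X}"
    using a X_H H_carrier by (intro generate_subgroup_incl subgroup_star_closed_right H) auto
  then show ?thesis using b by blast
qed

section \<open>The tensor square\<close>

abbreviation T :: "'a tm set monoid" where "T \<equiv> tensor_sq G st"
abbreviation cls :: "'a tm \<Rightarrow> 'a tm set" where "cls t \<equiv> teq_rel G st `` {t}"

lemma valid_tm_simps [simp]:
  "valid_tm G (Gen x y) \<longleftrightarrow> x \<in> carrier G \<and> y \<in> carrier G"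
  "valid_tm G Unit"
  "valid_tm G (Mul s t) \<longleftrightarrow> valid_tm G s \<and> valid_tm G t"
  "valid_tm G (Inv t) \<longleftrightarrow> valid_tm G t"
  "valid_tm G (Star s t) \<longleftrightarrow> valid_tm G s \<and> valid_tm G t"
  "valid_tm G (tcj s t) \<longleftrightarrow> valid_tm G s \<and> valid_tm G t"
  by (auto simp: valid_tm_def tcj_def)

lemma teq_valid: "teq G st t u \<Longrightarrow> valid_tm G t \<and> valid_tm G u"
  by (induction rule: teq.induct) auto

lemma equiv_teq_rel: "equiv {t. valid_tm G t} (teq_rel G st)"
  unfolding equiv_def refl_on_def sym_def trans_def teq_rel_def
  using teq_valid by (auto intro: teq.intros)

lemma cls_eqI: "teq G st t u \<Longrightarrow> cls t = cls u"
  using eq_equiv_class_iff[OF equiv_teq_rel] teq_valid by (simp add: teq_rel_def)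

lemma carrier_tensor_sq: "carrier T = {t. valid_tm G t} // teq_rel G st"
  by (simp add: tensor_sq_def)

lemma cls_in_carrier [simp]: "valid_tm G t \<Longrightarrow> cls t \<in> carrier T"
  by (simp add: carrier_tensor_sq quotientI)

lemma carrier_tensor_sqE:
  assumes "X \<in> carrier T"
  obtains t where "valid_tm G t" "X = cls t"
  using assms by (auto simp: carrier_tensor_sq elim!: quotientE)

lemma cls_self: "valid_tm G t \<Longrightarrow> t \<in> cls t"
  by (simp add: teq_rel_def teq.refl)

lemma one_tensor_sq: "\<one>\<^bsub>T\<^esub> = cls Unit"
  by (simp add: tensor_sq_def)

lemma mult_cls:
  assumes "valid_tm G s" "valid_tm G t"
  shows "cls s \<otimes>\<^bsub>T\<^esub> cls t = cls (Mul s t)"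
proof -
  have "tensor_mult G st (cls s) (cls t) = cls (Mul s t)"
    unfolding tensor_mult_def using assms cls_self
    by (auto simp: teq_rel_def intro: teq.cong_mul teq.trans teq.sym)
  then show ?thesis by (simp add: tensor_sq_def)
qed

lemma star_cls:
  assumes "valid_tm G s" "valid_tm G t"
  shows "tensor_star G st (cls s) (cls t) = cls (Star s t)"
  unfolding tensor_star_def using assms cls_self
  by (auto simp: teq_rel_def intro: teq.cong_star teq.trans teq.sym)

lemma group_tensor_sq: "group T"
proof (rule groupI)
  fix X Y assume "X \<in> carrier T" "Y \<in> carrier T"
  then show "X \<otimes>\<^bsub>T\<^esub> Y \<in> carrier T"
    by (elim carrier_tensor_sqE) (simp add: mult_cls)
next
  fix X Y Z assume "X \<in> carrier T" "Y \<in> carrier T" "Z \<in> carrier T"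
  then show "X \<otimes>\<^bsub>T\<^esub> Y \<otimes>\<^bsub>T\<^esub> Z = X \<otimes>\<^bsub>T\<^esub> (Y \<otimes>\<^bsub>T\<^esub> Z)"
    by (elim carrier_tensor_sqE) (simp add: mult_cls cls_eqI teq.assoc)
next
  fix X assume "X \<in> carrier T"
  then show "\<one>\<^bsub>T\<^esub> \<otimes>\<^bsub>T\<^esub> X = X"
    by (elim carrier_tensor_sqE) (simp add: mult_cls one_tensor_sq cls_eqI teq.lunit)
next
  fix X assume "X \<in> carrier T"
  then show "\<exists>Y\<in>carrier T. Y \<otimes>\<^bsub>T\<^esub> X = \<one>\<^bsub>T\<^esub>"
  proof (elim carrier_tensor_sqE)
    fix t assume t: "valid_tm G t" and "X = cls t"
    then show ?thesis
      by (intro bexI[of _ "cls (Inv t)"]) (simp_all add: mult_cls one_tensor_sq cls_eqI teq.linv)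
  qed
qed (simp add: one_tensor_sq)

lemma inv_cls: "valid_tm G t \<Longrightarrow> inv\<^bsub>T\<^esub> (cls t) = cls (Inv t)"
  by (rule group.inv_equality[OF group_tensor_sq]) (simp_all add: mult_cls one_tensor_sq cls_eqI teq.linv)

lemma conj_cls: "valid_tm G s \<Longrightarrow> valid_tm G t \<Longrightarrow> conj T (cls s) (cls t) = cls (tcj s t)"
  by (simp add: conj_def tcj_def mult_cls inv_cls)

lemma mult_lie_alg_tensor_sq: "mult_lie_alg T (tensor_star G st)"
proof -
  note cls_simps = star_cls mult_cls conj_cls inv_cls one_tensor_sq
  have closed: "tensor_star G st X Y \<in> carrier T"
    if "X \<in> carrier T" "Y \<in> carrier T" for X Y
    using that by (elim carrier_tensor_sqE) (simp add: cls_simps)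
  have self: "tensor_star G st X X = \<one>\<^bsub>T\<^esub>"
    if "X \<in> carrier T" for X
    using that by (elim carrier_tensor_sqE) (simp add: cls_simps cls_eqI teq.star_self)
  have mult_right: "tensor_star G st X (Y \<otimes>\<^bsub>T\<^esub> Z) =
      tensor_star G st X Y \<otimes>\<^bsub>T\<^esub> conj T Y (tensor_star G st X Z)"
    if "X \<in> carrier T" "Y \<in> carrier T" "Z \<in> carrier T" for X Y Z
    using that by (elim carrier_tensor_sqE) (simp add: cls_simps cls_eqI teq.star_mul_r)
  have mult_left: "tensor_star G st (X \<otimes>\<^bsub>T\<^esub> Y) Z =
      conj T X (tensor_star G st Y Z) \<otimes>\<^bsub>T\<^esub> tensor_star G st X Z"
    if "X \<in> carrier T" "Y \<in> carrier T" "Z \<in> carrier T" for X Y Z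
    using that by (elim carrier_tensor_sqE) (simp add: cls_simps cls_eqI teq.star_mul_l)
  have jacobi: "tensor_star G st (tensor_star G st X Y) (conj T Y Z) \<otimes>\<^bsub>T\<^esub>
      tensor_star G st (tensor_star G st Y Z) (conj T Z X) \<otimes>\<^bsub>T\<^esub>
      tensor_star G st (tensor_star G st Z X) (conj T X Y) = \<one>\<^bsub>T\<^esub>"
    if "X \<in> carrier T" "Y \<in> carrier T" "Z \<in> carrier T" for X Y Z
    using that by (elim carrier_tensor_sqE) (simp add: cls_simps cls_eqI teq.jacobi)
  have conj_star: "conj T Z (tensor_star G st X Y) = tensor_star G st (conj T Z X) (conj T Z Y)"
    if "X \<in> carrier T" "Y \<in> carrier T" "Z \<in> carrier T" for X Y Z
    using that by (elim carrier_tensor_sqE) (simp add: cls_simps cls_eqI teq.star_conj)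
  show ?thesis
    unfolding mult_lie_alg_def
    by (intro conjI ballI group_tensor_sq closed self mult_right mult_left jacobi conj_star) assumption+
qed

interpretation T: mla T "tensor_star G st"
  by (rule mla.intro[OF mult_lie_alg_tensor_sq])

lemma tens_eq_cls: "tens G st x y = cls (Gen x y)"
  by (simp add: tens_def)

lemma tens_closed [simp]: "x \<in> carrier G \<Longrightarrow> y \<in> carrier G \<Longrightarrow> tens G st x y \<in> carrier T"
  by (simp add: tens_eq_cls)

lemma tens_mult_right:
  "x \<in> carrier G \<Longrightarrow> y \<in> carrier G \<Longrightarrow> y' \<in> carrier G \<Longrightarrow>
    tens G st x (y \<otimes> y') = tens G st x y \<otimes>\<^bsub>T\<^esub> tens G st (conj G y x) (conj G y y')"
  by (simp add: tens_eq_cls mult_cls cls_eqI teq.rel1)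

lemma tens_mult_left:
  "x \<in> carrier G \<Longrightarrow> x' \<in> carrier G \<Longrightarrow> y \<in> carrier G \<Longrightarrow>
    tens G st (x \<otimes> x') y = tens G st (conj G x x') (conj G x y) \<otimes>\<^bsub>T\<^esub> tens G st x y"
  by (simp add: tens_eq_cls mult_cls cls_eqI teq.rel2)

lemma tens_star_tens:
  "x \<in> carrier G \<Longrightarrow> y \<in> carrier G \<Longrightarrow> x' \<in> carrier G \<Longrightarrow> y' \<in> carrier G \<Longrightarrow>
    tensor_star G st (tens G st x y) (tens G st x' y') = tens G st (st x y) (st x' y')"
  using teq.rel5[of x G y x' y' st] by (simp add: tens_eq_cls star_cls cls_eqI inv_star)

lemma tens_one_left [simp]: "y \<in> carrier G \<Longrightarrow> tens G st \<one> y = \<one>\<^bsub>T\<^esub>"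
  using tens_mult_left[of \<one> \<one> y] by (simp add: conj_def)

lemma generate_tens_eq_carrier:
  "generate T {tens G st x y | x y. x \<in> carrier G \<and> y \<in> carrier G} = carrier T"
    (is "generate T ?S = _")
proof
  have S: "?S \<subseteq> carrier T" by auto
  then show "generate T ?S \<subseteq> carrier T"
    by (rule T.generate_incl)
  have H: "subgroup (generate T ?S) T"
    by (rule T.generate_is_subgroup[OF S])
  have "cls t \<in> generate T ?S" if "valid_tm G t" for t
    using that
  proof (induction t)
    case (Gen x y)
    then show ?case by (auto simp: tens_eq_cls intro: generate.incl)
  next
    case Unit
    then show ?case using generate.one[of T ?S] by (simp add: one_tensor_sq)
  next
    case (Mul s t)
    then show ?case using generate.eng[of _ T ?S] by (simp add: mult_cls[symmetric])
  next
    case (Inv t)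
    then show ?case using subgroup.m_inv_closed[OF H] by (simp add: inv_cls[symmetric])
  next
    case (Star s t)
    have "tensor_star G st x y \<in> generate T ?S" if "x \<in> ?S" "y \<in> ?S" for x y
      using that by (force simp: tens_star_tens intro!: generate.incl)
    with Star S show ?case
      using T.generate_star_closed[of ?S "cls s" "cls t"] by (simp add: star_cls[symmetric])
  qed
  then show "carrier T \<subseteq> generate T ?S"
    by (auto elim: carrier_tensor_sqE)
qed

lemma tens_mult_conj_swap:
  assumes x: "x \<in> carrier G" and y: "y \<in> carrier G" and a: "a \<in> carrier G" and b: "b \<in> carrier G"
  shows "tens G st x y \<otimes>\<^bsub>T\<^esub> tens G st (conj G (y \<otimes> x) a) (conj G (y \<otimes> x) b) =
    tens G st (conj G (x \<otimes> y) a) (conj G (x \<otimes> y) b) \<otimes>\<^bsub>T\<^esub> tens G st x y"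
proof -
  define P where "P = tens G st (conj G x a) (conj G x y)"
  define Q where "Q = tens G st x y"
  define U where "U = tens G st (conj G (y \<otimes> x) a) (conj G (y \<otimes> x) b)"
  define V where "V = tens G st (conj G y x) (conj G y b)"
  define W where "W = tens G st (conj G (x \<otimes> y) a) (conj G (x \<otimes> y) b)"
  have PQUVW: "P \<in> carrier T" "Q \<in> carrier T" "U \<in> carrier T" "V \<in> carrier T" "W \<in> carrier T"
    using x y a b by (simp_all add: P_def Q_def U_def V_def W_def)
  have "tens G st (x \<otimes> a) (y \<otimes> b) = tens G st (x \<otimes> a) y \<otimes>\<^bsub>T\<^esub> tens G st (conj G y (x \<otimes> a)) (conj G y b)"
    using x y a b by (simp add: tens_mult_right)
  also have "\<dots> = P \<otimes>\<^bsub>T\<^esub> Q \<otimes>\<^bsub>T\<^esub> (U \<otimes>\<^bsub>T\<^esub> V)"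
    using x y a b by (simp add: tens_mult_left conj_mult conj_conj P_def Q_def U_def V_def)
  finally have expand_right_first: "tens G st (x \<otimes> a) (y \<otimes> b) = P \<otimes>\<^bsub>T\<^esub> Q \<otimes>\<^bsub>T\<^esub> (U \<otimes>\<^bsub>T\<^esub> V)" .
  have "tens G st (x \<otimes> a) (y \<otimes> b) = tens G st (conj G x a) (conj G x (y \<otimes> b)) \<otimes>\<^bsub>T\<^esub> tens G st x (y \<otimes> b)"
    using x y a b by (simp add: tens_mult_left)
  also have "\<dots> = P \<otimes>\<^bsub>T\<^esub> W \<otimes>\<^bsub>T\<^esub> (Q \<otimes>\<^bsub>T\<^esub> V)"
    using x y a b by (simp add: tens_mult_right conj_mult conj_conj P_def Q_def V_def W_def)
  finally have "P \<otimes>\<^bsub>T\<^esub> ((Q \<otimes>\<^bsub>T\<^esub> U) \<otimes>\<^bsub>T\<^esub> V) = P \<otimes>\<^bsub>T\<^esub> ((W \<otimes>\<^bsub>T\<^esub> Q) \<otimes>\<^bsub>T\<^esub> V)"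
    using expand_right_first PQUVW by (simp add: T.m_assoc)
  then show ?thesis
    using PQUVW by (simp add: Q_def U_def W_def)
qed

lemma tens_commute_of_commute:
  assumes x: "x \<in> carrier G" and y: "y \<in> carrier G" and xy: "x \<otimes> y = y \<otimes> x"
    and a: "a \<in> carrier G" and b: "b \<in> carrier G"
  shows "tens G st x y \<otimes>\<^bsub>T\<^esub> tens G st a b = tens G st a b \<otimes>\<^bsub>T\<^esub> tens G st x y"
  using tens_mult_conj_swap[OF x y, of "conj G (inv (y \<otimes> x)) a" "conj G (inv (y \<otimes> x)) b"] x y a b
  by (simp add: xy conj_inv_conj)

lemma tens_in_grp_center:
  assumes "x \<in> carrier G" "y \<in> carrier G" "x \<otimes> y = y \<otimes> x"
  shows "tens G st x y \<in> grp_center T"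
proof (rule T.grp_centerI_generate[OF generate_tens_eq_carrier])
  fix z assume "z \<in> {tens G st a b | a b. a \<in> carrier G \<and> b \<in> carrier G}"
  then obtain a b where "z = tens G st a b" "a \<in> carrier G" "b \<in> carrier G" by blast
  then show "tens G st x y \<otimes>\<^bsub>T\<^esub> z = z \<otimes>\<^bsub>T\<^esub> tens G st x y"
    using assms by (simp add: tens_commute_of_commute)
qed (use assms in simp)

lemma tens_in_lie_center:
  assumes "x \<in> carrier G" "y \<in> carrier G" "st x y = \<one>"
  shows "tens G st x y \<in> lie_center T (tensor_star G st)"
proof (rule T.lie_centerI_generate[OF generate_tens_eq_carrier])
  fix z assume "z \<in> {tens G st a b | a b. a \<in> carrier G \<and> b \<in> carrier G}"
  then obtain a b where "z = tens G st a b" "a \<in> carrier G" "b \<in> carrier G" by blast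
  then show "tensor_star G st (tens G st x y) z = \<one>\<^bsub>T\<^esub>"
    using assms by (simp add: tens_star_tens)
qed (use assms in simp)

lemma tens_left_tens_right_subset:
  assumes K: "subgroup K T"
    and sym_in_K: "\<And>a b. a \<in> A \<Longrightarrow> b \<in> carrier G \<Longrightarrow> tens G st a b \<in> K \<and> tens G st b a \<in> K"
  shows "tens_left G st A <#>\<^bsub>T\<^esub> tens_right G st A \<subseteq> K"
proof -
  have "{tens G st a b | a b. a \<in> A \<and> b \<in> carrier G} \<subseteq> K"
    using sym_in_K by blast
  then have left: "tens_left G st A \<subseteq> K"
    unfolding tens_left_def by (rule T.generate_subgroup_incl[OF _ K])
  have "{tens G st a b | a b. a \<in> carrier G \<and> b \<in> A} \<subseteq> K"
    using sym_in_K by blast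
  then have right: "tens_right G st A \<subseteq> K"
    unfolding tens_right_def by (rule T.generate_subgroup_incl[OF _ K])
  from left right show ?thesis
    unfolding set_mult_def by (auto intro: subgroup.m_closed[OF K])
qed

lemma tens_of_grp_center:
  assumes a: "a \<in> grp_center G" and b: "b \<in> carrier G"
  shows "tens G st a b \<in> grp_center T \<and> tens G st b a \<in> grp_center T"
proof -
  have "a \<in> carrier G" "a \<otimes> b = b \<otimes> a" using a b by (auto simp: grp_center_def)
  then show ?thesis using b by (simp add: tens_in_grp_center)
qed

lemma tens_of_lie_center:
  assumes a: "a \<in> lie_center G st" and b: "b \<in> carrier G"
  shows "tens G st a b \<in> lie_center T (tensor_star G st) \<and> tens G st b a \<in> lie_center T (tensor_star G st)"
proof -
  have "a \<in> carrier G" "st a b = \<one>" using a b by (auto simp: lie_center_def)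
  then show ?thesis using b by (simp add: tens_in_lie_center star_eq_one_swap)
qed

lemma tens_of_mla_center:
  "a \<in> mla_center G st \<Longrightarrow> b \<in> carrier G \<Longrightarrow>
    tens G st a b \<in> mla_center T (tensor_star G st) \<and> tens G st b a \<in> mla_center T (tensor_star G st)"
  using tens_of_grp_center tens_of_lie_center unfolding mla_center_def by blast

end

theorem lemma3p3:
  fixes G :: "('a, 'b) monoid_scheme" and st :: "'a \<Rightarrow> 'a \<Rightarrow> 'a"
  assumes "mult_lie_alg G st"
  shows "(tens_left G st (grp_center G) <#>\<^bsub>tensor_sq G st\<^esub> tens_right G st (grp_center G)
           \<subseteq> grp_center (tensor_sq G st)) \<and>
         (tens_left G st (lie_center G st) <#>\<^bsub>tensor_sq G st\<^esub> tens_right G st (lie_center G st)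
           \<subseteq> lie_center (tensor_sq G st) (tensor_star G st)) \<and>
         (tens_left G st (mla_center G st) <#>\<^bsub>tensor_sq G st\<^esub> tens_right G st (mla_center G st)
           \<subseteq> mla_center (tensor_sq G st) (tensor_star G st))"
proof -
  interpret mla G st by (rule mla.intro[OF assms])
  interpret T: mla T "tensor_star G st" by (rule mla.intro[OF mult_lie_alg_tensor_sq])
  show ?thesis
    using tens_left_tens_right_subset[OF T.subgroup_grp_center tens_of_grp_center]
      tens_left_tens_right_subset[OF T.subgroup_lie_center tens_of_lie_center]
      tens_left_tens_right_subset[OF T.subgroup_mla_center tens_of_mla_center]
    by blast
qed

end
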